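(* Let $C, A \subseteq \omega$ with $A \not\leq_T C$. Then every condition has an acceptable part. Moreover, for every condition $c$ and every $m \in \omega$ there is a condition $d$ extending $c$ such that $d$ forces $Q_m$ on each of its acceptable parts.
   Context: Fix sets $C, A \subseteq \omega$. For $\sigma \in 2^{<\omega}$ and $X \in 2^\omega$ (or a string of length at least $|\sigma|$), $X/\sigma$ denotes the result of replacing the first $|\sigma|$ bits of $X$ by $\sigma$; strings and elements of $2^\omega$ are identified with (finite or infinite) subsets of $\omega$. A Mathias condition is a pair $(\sigma, X)$ with $\sigma \in 2^{<\omega}$, $X \in 2^\omega$; $(\tau,Y)$ extends $(\sigma,X)$ if $\sigma \preceq \tau$ and $Y/\tau \subseteq X/\sigma$; a set $G$ satisfies $(\sigma,X)$ if $\sigma \prec G$ and $G \subseteq X/\sigma$. A set $X = X_0 \oplus \cdots \oplus X_{k-1}$ codes an ordered $k$-partition of $\omega$ if $\bigcup_{i<k} X_i = \omega$ (the parts need not be disjoint). A condition is a tuple $c = (k, \sigma_0, \ldots, \sigma_{k-1}, P)$ with $k > 0$, each $\sigma_i \in 2^{<\omega}$, and $P$ a non-empty $\Pi^{0,C}_1$ class each of whose members codes an ordered $k$-partition of $\omega$. A condition $d = (m, \tau_0,\ldots,\tau_{m-1}, Q)$ extends $c$ if there is a function $f : m \to k$ such that for every $Y_0 \oplus \cdots \oplus Y_{m-1} \in Q$ there is $X_0 \oplus \cdots \oplus X_{k-1} \in P$ such that for each $i<m$ the Mathias condition $(\tau_i, Y_i)$ extends $(\sigma_{f(i)}, X_{f(i)})$.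 A set $G$ satisfies $c$ on part $i$ if there is $X_0\oplus\cdots\oplus X_{k-1} \in P$ with $G$ satisfying $(\sigma_i, X_i)$. Part $i$ of $c$ is acceptable if there is $X_0 \oplus \cdots \oplus X_{k-1} \in P$ such that $X_i \cap A$ and $X_i \cap \overline{A}$ are both infinite. The condition $c$ forces $Q_m$ on part $i$ if $|\sigma_i \cap A| \geq m$ and $|\sigma_i \cap \overline{A}| \geq m$ (with $\sigma_i$ viewed as a finite set). *)

theory Defs
  imports Main "HOL-Library.Nat_Bijection" "HOL-Library.Sublist"
begin

datatype rf =
    Zer
  | Suc_f
  | Lft
  | Rgt
  | Orc
  | Comp rf rf
  | Pair rf rf
  | Prec rf rf
  | Mu rf

inductive eval :: "nat set \<Rightarrow> rf \<Rightarrow> nat \<Rightarrow> nat \<Rightarrow> bool" for Or :: "nat set" where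
  ev_zer: "eval Or Zer x 0"
| ev_suc: "eval Or Suc_f x (Suc x)"
| ev_lft: "eval Or Lft x (fst (prod_decode x))"
| ev_rgt: "eval Or Rgt x (snd (prod_decode x))"
| ev_orc: "eval Or Orc x (if x \<in> Or then 1 else 0)"
| ev_comp: "eval Or g x y \<Longrightarrow> eval Or f y z \<Longrightarrow> eval Or (Comp f g) x z"
| ev_pair: "eval Or f x y \<Longrightarrow> eval Or g x z \<Longrightarrow> eval Or (Pair f g) x (prod_encode (y, z))"
| ev_prec0: "eval Or f y z \<Longrightarrow> eval Or (Prec f g) (prod_encode (y, 0)) z"
| ev_precS: "eval Or (Prec f g) (prod_encode (y, n)) r \<Longrightarrow>
             eval Or g (prod_encode (y, prod_encode (n, r))) z \<Longrightarrow>
             eval Or (Prec f g) (prod_encode (y, Suc n)) z"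
| ev_mu: "eval Or f (prod_encode (x, n)) 0 \<Longrightarrow>
          (\<forall>i<n. \<exists>v. eval Or f (prod_encode (x, i)) v \<and> v \<noteq> 0) \<Longrightarrow>
          eval Or (Mu f) x n"

definition computable_in :: "nat set \<Rightarrow> (nat \<Rightarrow> nat) \<Rightarrow> bool" where
  "computable_in Or h \<longleftrightarrow> (\<exists>p. \<forall>x. eval Or p x (h x))"

definition chi :: "nat set \<Rightarrow> nat \<Rightarrow> nat" where
  "chi S x = (if x \<in> S then 1 else 0)"

definition turing_le :: "nat set \<Rightarrow> nat set \<Rightarrow> bool" where
  "turing_le A C \<longleftrightarrow> computable_in C (chi A)"

text \<open>Strings are bool lists; a canonical bijective coding of strings by naturals.\<close>
fun strcode :: "bool list \<Rightarrow> nat" where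
  "strcode [] = 0"
| "strcode (b # bs) = Suc (2 * strcode bs + (if b then 1 else 0))"

definition init_seg :: "nat set \<Rightarrow> nat \<Rightarrow> bool list" where
  "init_seg X n = map (\<lambda>i. i \<in> X) [0..<n]"

definition pi01_class :: "nat set \<Rightarrow> nat set set \<Rightarrow> bool" where
  "pi01_class C P \<longleftrightarrow>
     (\<exists>T. computable_in C (chi T) \<and> P = {X. \<forall>n. strcode (init_seg X n) \<in> T})"

definition str_set :: "bool list \<Rightarrow> nat set" where
  "str_set \<sigma> = {n. n < length \<sigma> \<and> \<sigma> ! n}"

definition repl :: "nat set \<Rightarrow> bool list \<Rightarrow> nat set" where
  "repl X \<sigma> = {n. if n < length \<sigma> then \<sigma> ! n else n \<in> X}"

definition mathias_ext :: "bool list \<Rightarrow> nat set \<Rightarrow> bool list \<Rightarrow> nat set \<Rightarrow> bool" where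
  "mathias_ext \<tau> Y \<sigma> X \<longleftrightarrow> prefix \<sigma> \<tau> \<and> repl Y \<tau> \<subseteq> repl X \<sigma>"

text \<open>Part i of X = X_0 \<oplus> ... \<oplus> X_{k-1}: X_i = {n. k*n+i \<in> X}.\<close>
definition part :: "nat \<Rightarrow> nat set \<Rightarrow> nat \<Rightarrow> nat set" where
  "part k X i = {n. k * n + i \<in> X}"

definition codes_partition :: "nat \<Rightarrow> nat set \<Rightarrow> bool" where
  "codes_partition k X \<longleftrightarrow> (\<Union>i<k. part k X i) = UNIV"

type_synonym cond = "nat \<times> bool list list \<times> nat set set"

definition is_condition :: "nat set \<Rightarrow> cond \<Rightarrow> bool" where
  "is_condition C c \<longleftrightarrow> (case c of (k, \<sigma>s, P) \<Rightarrow>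
     k > 0 \<and> length \<sigma>s = k \<and> P \<noteq> {} \<and> pi01_class C P \<and>
     (\<forall>X\<in>P. codes_partition k X))"

definition cond_extends :: "cond \<Rightarrow> cond \<Rightarrow> bool" where
  "cond_extends d c \<longleftrightarrow> (case d of (m, \<tau>s, Q) \<Rightarrow> case c of (k, \<sigma>s, P) \<Rightarrow>
     (\<exists>f. (\<forall>i<m. f i < k) \<and>
        (\<forall>Y\<in>Q. \<exists>X\<in>P. \<forall>i<m.
           mathias_ext (\<tau>s ! i) (part m Y i) (\<sigma>s ! (f i)) (part k X (f i)))))"

definition acceptable_part :: "nat set \<Rightarrow> cond \<Rightarrow> nat \<Rightarrow> bool" where
  "acceptable_part A c i \<longleftrightarrow> (case c of (k, \<sigma>s, P) \<Rightarrow>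
     i < k \<and> (\<exists>X\<in>P. infinite (part k X i \<inter> A) \<and> infinite (part k X i - A)))"

definition forces_Q :: "nat set \<Rightarrow> cond \<Rightarrow> nat \<Rightarrow> nat \<Rightarrow> bool" where
  "forces_Q A c i m \<longleftrightarrow> (case c of (k, \<sigma>s, P) \<Rightarrow>
     card (str_set (\<sigma>s ! i) \<inter> A) \<ge> m \<and> card (str_set (\<sigma>s ! i) - A) \<ge> m)"

end

theory Submission
  imports Defs
begin

text \<open>If no part of a condition (k, \<sigma>s, P) were acceptable, every path Y of P would have
  each part Y_i almost inside A or almost inside its complement. A finite-extension construction
  inside P produces a path that, for every finite guess I of the parts lying almost inside A and
  every bound N, puts some n > N into a wrongly guessed part --- unless some cylinder of P contains
  no such path for some I and N. In that case A is computable from C: for n > N exactly one of the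
  two possible guesses about n is realised by a path of the cylinder, and by K\<ouml>nig's lemma the
  other one fails at a finite level of the C-computable tree, which can be found by search. Applied
  to the generic path and its true guess, this yields a contradiction.

  To force Q_m, the parts are treated one after another: if some member of the class has m
  elements of A and m elements of its complement in part j beyond the current stem, these are
  appended to the stem of part j and the class is cut down to the members containing them, which
  is again a Pi^0_1 class; otherwise part j is not acceptable, neither now nor in any later
  extension.\<close>

section \<open>Closure properties of oracle computability\<close>

text \<open>The function computed by the program Prec p q on the pair (y, n), when p computes f and q
  computes g.\<close>

fun prim_rec :: "(nat \<Rightarrow> nat) \<Rightarrow> (nat \<Rightarrow> nat) \<Rightarrow> nat \<Rightarrow> nat \<Rightarrow> nat" where
  "prim_rec f g y 0 = f y"
| "prim_rec f g y (Suc n) = g (prod_encode (y, prod_encode (n, prim_rec f g y n)))"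

lemma computable_in_const: "computable_in C (\<lambda>x. c)"
proof (induction c)
  case 0
  show ?case unfolding computable_in_def by (blast intro: ev_zer)
next
  case (Suc c)
  then obtain p where "\<forall>x. eval C p x c" unfolding computable_in_def by blast
  then show ?case unfolding computable_in_def by (blast intro: ev_comp ev_suc)
qed

lemma computable_in_compose:
  "computable_in C f \<Longrightarrow> computable_in C g \<Longrightarrow> computable_in C (\<lambda>x. f (g x))"
  unfolding computable_in_def by (blast intro: ev_comp)

lemma computable_in_Suc: "computable_in C Suc"
  unfolding computable_in_def by (blast intro: ev_suc)

lemma computable_in_fst_prod_decode: "computable_in C (\<lambda>x. fst (prod_decode x))"
  unfolding computable_in_def by (blast intro: ev_lft)

lemma computable_in_snd_prod_decode: "computable_in C (\<lambda>x. snd (prod_decode x))"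
  unfolding computable_in_def by (blast intro: ev_rgt)

lemma computable_in_prod_encode:
  "computable_in C f \<Longrightarrow> computable_in C g \<Longrightarrow> computable_in C (\<lambda>x. prod_encode (f x, g x))"
  unfolding computable_in_def by (blast intro: ev_pair)

lemma computable_in_prim_rec:
  assumes "computable_in C f" "computable_in C g" "computable_in C a" "computable_in C b"
  shows "computable_in C (\<lambda>x. prim_rec f g (a x) (b x))"
proof -
  obtain p q where p: "\<forall>x. eval C p x (f x)" and q: "\<forall>x. eval C q x (g x)"
    using assms(1,2) unfolding computable_in_def by blast
  have "eval C (Prec p q) (prod_encode (y, n)) (prim_rec f g y n)" for y n
    by (induction n) (use p q in \<open>auto intro: ev_prec0 ev_precS\<close>)
  then have "computable_in C (\<lambda>z. prim_rec f g (fst (prod_decode z)) (snd (prod_decode z)))"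
    unfolding computable_in_def by (metis prod.collapse prod_decode_inverse)
  from computable_in_compose[OF this computable_in_prod_encode[OF assms(3,4)]] show ?thesis
    by simp
qed

lemma computable_in_Least_zero:
  assumes h: "computable_in C h" and ex: "\<forall>x. \<exists>n. h (prod_encode (x, n)) = 0"
  shows "computable_in C (\<lambda>x. LEAST n. h (prod_encode (x, n)) = 0)"
proof -
  obtain p where p: "\<forall>x. eval C p x (h x)" using h unfolding computable_in_def by blast
  have "eval C (Mu p) x (LEAST n. h (prod_encode (x, n)) = 0)" for x
  proof (rule ev_mu)
    show "eval C p (prod_encode (x, LEAST n. h (prod_encode (x, n)) = 0)) 0"
      using p LeastI_ex[OF ex[rule_format, of x]] by metis
    show "\<forall>i<LEAST n. h (prod_encode (x, n)) = 0. \<exists>v. eval C p (prod_encode (x, i)) v \<and> v \<noteq> 0"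
      using p not_less_Least by blast
  qed
  then show ?thesis unfolding computable_in_def by blast
qed

lemma computable_in_pred:
  assumes "computable_in C f"
  shows "computable_in C (\<lambda>x. f x - 1)"
proof -
  have "prim_rec (\<lambda>_. 0) (\<lambda>q. fst (prod_decode (snd (prod_decode q)))) y n = n - 1" for y n
    by (cases n) auto
  moreover have "computable_in C (\<lambda>x. prim_rec (\<lambda>_. 0)
      (\<lambda>q. fst (prod_decode (snd (prod_decode q)))) 0 (f x))"
    by (intro computable_in_prim_rec computable_in_const assms
        computable_in_compose[OF computable_in_fst_prod_decode computable_in_snd_prod_decode])
  ultimately show ?thesis by simp
qed

lemma computable_in_id: "computable_in C (\<lambda>x. x)"
  using computable_in_pred[OF computable_in_Suc] by simp

lemma computable_in_fst: "computable_in C f \<Longrightarrow> computable_in C (\<lambda>x. fst (prod_decode (f x)))"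
  by (rule computable_in_compose[OF computable_in_fst_prod_decode])

lemma computable_in_snd: "computable_in C f \<Longrightarrow> computable_in C (\<lambda>x. snd (prod_decode (f x)))"
  by (rule computable_in_compose[OF computable_in_snd_prod_decode])

lemma computable_in_Suc_app: "computable_in C f \<Longrightarrow> computable_in C (\<lambda>x. Suc (f x))"
  by (rule computable_in_compose[OF computable_in_Suc])

lemmas computable_in_intros = computable_in_const computable_in_id computable_in_Suc_app
  computable_in_fst computable_in_snd computable_in_prod_encode

lemma computable_in_add:
  assumes "computable_in C f" "computable_in C g"
  shows "computable_in C (\<lambda>x. f x + g x)"
proof -
  have "prim_rec (\<lambda>y. y) (\<lambda>q. Suc (snd (prod_decode (snd (prod_decode q))))) y n = y + n" for y n
    by (induction n) auto
  moreover have "computable_in C (\<lambda>x. prim_rec (\<lambda>y. y)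
      (\<lambda>q. Suc (snd (prod_decode (snd (prod_decode q))))) (f x) (g x))"
    by (intro computable_in_prim_rec computable_in_intros assms)
  ultimately show ?thesis by simp
qed

lemma computable_in_diff:
  assumes "computable_in C f" "computable_in C g"
  shows "computable_in C (\<lambda>x. f x - g x)"
proof -
  have "prim_rec (\<lambda>y. y) (\<lambda>q. snd (prod_decode (snd (prod_decode q))) - 1) y n = y - n" for y n
    by (induction n) auto
  moreover have "computable_in C (\<lambda>x. prim_rec (\<lambda>y. y)
      (\<lambda>q. snd (prod_decode (snd (prod_decode q))) - 1) (f x) (g x))"
    by (intro computable_in_prim_rec computable_in_pred computable_in_intros assms)
  ultimately show ?thesis by simp
qed

lemma computable_in_mult:
  assumes "computable_in C f" "computable_in C g"
  shows "computable_in C (\<lambda>x. f x * g x)"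
proof -
  have "prim_rec (\<lambda>_. 0) (\<lambda>q. snd (prod_decode (snd (prod_decode q))) + fst (prod_decode q)) y n
      = y * n" for y n
    by (induction n) auto
  moreover have "computable_in C (\<lambda>x. prim_rec (\<lambda>_. 0)
      (\<lambda>q. snd (prod_decode (snd (prod_decode q))) + fst (prod_decode q)) (f x) (g x))"
    by (intro computable_in_prim_rec computable_in_add computable_in_intros assms)
  ultimately show ?thesis by simp
qed

lemma computable_in_power2:
  assumes "computable_in C f"
  shows "computable_in C (\<lambda>x. 2 ^ f x)"
proof -
  have "prim_rec (\<lambda>_. 1) (\<lambda>q. 2 * snd (prod_decode (snd (prod_decode q)))) y n = 2 ^ n" for y n
    by (induction n) auto
  moreover have "computable_in C (\<lambda>x. prim_rec (\<lambda>_. 1)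
      (\<lambda>q. 2 * snd (prod_decode (snd (prod_decode q)))) 0 (f x))"
    by (intro computable_in_prim_rec computable_in_mult computable_in_intros assms)
  ultimately show ?thesis by simp
qed

lemma computable_in_sum:
  assumes H: "computable_in C (\<lambda>p. H (fst (prod_decode p)) (snd (prod_decode p)))"
    and f: "computable_in C f"
  shows "computable_in C (\<lambda>x. \<Sum>i<f x. H x i)"
proof -
  let ?g = "\<lambda>q. snd (prod_decode (snd (prod_decode q)))
    + H (fst (prod_decode q)) (fst (prod_decode (snd (prod_decode q))))"
  have "prim_rec (\<lambda>_. 0) ?g y n = (\<Sum>i<n. H y i)" for y n
    by (induction n) auto
  moreover have
    "computable_in C (\<lambda>q. H (fst (prod_decode q)) (fst (prod_decode (snd (prod_decode q)))))"
    using computable_in_compose[OF H computable_in_prod_encode[OF computable_in_fst[OF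
      computable_in_id] computable_in_fst[OF computable_in_snd[OF computable_in_id]]]]
    by simp
  then have "computable_in C (\<lambda>x. prim_rec (\<lambda>_. 0) ?g x (f x))"
    by (intro computable_in_prim_rec computable_in_add computable_in_intros f)
  ultimately show ?thesis by simp
qed

lemmas computable_in_arith_intros = computable_in_intros computable_in_add computable_in_diff
  computable_in_mult computable_in_power2 computable_in_sum

definition decidable_in :: "nat set \<Rightarrow> (nat \<Rightarrow> bool) \<Rightarrow> bool" where
  "decidable_in C R \<longleftrightarrow> computable_in C (\<lambda>x. if R x then 1 else 0)"

lemma turing_le_iff_decidable_in: "turing_le A C \<longleftrightarrow> decidable_in C (\<lambda>x. x \<in> A)"
  by (simp add: turing_le_def decidable_in_def chi_def[abs_def])

lemma computable_in_chi_iff: "computable_in C (chi S) \<longleftrightarrow> decidable_in C (\<lambda>x. x \<in> S)"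
  by (simp add: decidable_in_def chi_def[abs_def])

lemma computable_in_cong: "computable_in C f \<Longrightarrow> (\<And>x. f x = g x) \<Longrightarrow> computable_in C g"
  by (metis ext)

lemma decidable_in_cong:
  assumes "decidable_in C R" "\<And>x. R x \<longleftrightarrow> S x"
  shows "decidable_in C S"
proof -
  have "R = S" by (rule ext) (rule assms(2))
  with assms(1) show ?thesis by simp
qed

lemma computable_in_if:
  assumes "decidable_in C R" "computable_in C f" "computable_in C g"
  shows "computable_in C (\<lambda>x. if R x then f x else g x)"
proof -
  have "computable_in C (\<lambda>x. (if R x then 1 else 0) * f x + (1 - (if R x then 1 else 0)) * g x)"
    using assms unfolding decidable_in_def by (intro computable_in_arith_intros)
  then show ?thesis by (rule computable_in_cong) simp
qed

lemma decidable_in_const: "decidable_in C (\<lambda>x. P)"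
  unfolding decidable_in_def by (rule computable_in_const)

lemma decidable_in_less:
  assumes "computable_in C f" "computable_in C g"
  shows "decidable_in C (\<lambda>x. f x < g x)"
proof -
  have "computable_in C (\<lambda>x. 1 - (1 - (g x - f x)))"
    by (intro computable_in_arith_intros assms)
  then show ?thesis unfolding decidable_in_def by (rule computable_in_cong) simp
qed

lemma decidable_in_not:
  assumes "decidable_in C R"
  shows "decidable_in C (\<lambda>x. \<not> R x)"
  using computable_in_if[OF assms computable_in_const computable_in_const, of 0 1]
  unfolding decidable_in_def by (rule computable_in_cong) simp

lemma decidable_in_conj:
  assumes "decidable_in C R" "decidable_in C S"
  shows "decidable_in C (\<lambda>x. R x \<and> S x)"
  using computable_in_if[OF assms(1) assms(2)[unfolded decidable_in_def] computable_in_const, of 0]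
  unfolding decidable_in_def by (rule computable_in_cong) simp

lemma decidable_in_disj:
  assumes "decidable_in C R" "decidable_in C S"
  shows "decidable_in C (\<lambda>x. R x \<or> S x)"
  using computable_in_if[OF assms(1) computable_in_const assms(2)[unfolded decidable_in_def], of 1]
  unfolding decidable_in_def by (rule computable_in_cong) simp

lemma decidable_in_iff:
  assumes "decidable_in C R" "decidable_in C S"
  shows "decidable_in C (\<lambda>x. R x \<longleftrightarrow> S x)"
  using computable_in_if[OF assms(1) assms(2)[unfolded decidable_in_def]
      decidable_in_not[OF assms(2), unfolded decidable_in_def]]
  unfolding decidable_in_def by (rule computable_in_cong) simp

lemma decidable_in_eq:
  assumes "computable_in C f" "computable_in C g"
  shows "decidable_in C (\<lambda>x. f x = g x)"
  using decidable_in_conj[OF decidable_in_not[OF decidable_in_less[OF assms]]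
      decidable_in_not[OF decidable_in_less[OF assms(2,1)]]]
  by (rule decidable_in_cong) auto

lemma decidable_in_ball:
  assumes "decidable_in C (\<lambda>p. R (fst (prod_decode p)) (snd (prod_decode p)))"
    and "computable_in C f"
  shows "decidable_in C (\<lambda>x. \<forall>i<f x. R x i)"
proof -
  have "decidable_in C (\<lambda>x. (\<Sum>i<f x. if R x i then 0 else 1) = (0::nat))"
    by (intro decidable_in_eq computable_in_sum computable_in_if assms computable_in_const)
  then show ?thesis by (rule decidable_in_cong) auto
qed

lemma decidable_in_bex:
  assumes "decidable_in C (\<lambda>p. R (fst (prod_decode p)) (snd (prod_decode p)))"
    and "computable_in C f"
  shows "decidable_in C (\<lambda>x. \<exists>i<f x. R x i)"
  using decidable_in_not[OF decidable_in_ball[OF decidable_in_not[OF assms(1)] assms(2)]]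
  by (rule decidable_in_cong) auto

lemma computable_in_Least:
  assumes "decidable_in C (\<lambda>p. R (fst (prod_decode p)) (snd (prod_decode p)))"
    and "\<forall>x. \<exists>n. R x n"
  shows "computable_in C (\<lambda>x. LEAST n. R x n)"
proof -
  have zero_iff: "(if P then 0 else 1::nat) = 0 \<longleftrightarrow> P" for P by simp
  have "computable_in C (\<lambda>p. if R (fst (prod_decode p)) (snd (prod_decode p)) then 0 else 1)"
    by (intro computable_in_if assms computable_in_const)
  from computable_in_Least_zero[OF this] show ?thesis
    using assms(2) by (simp add: zero_iff)
qed

lemma computable_in_div:
  assumes "computable_in C f" "computable_in C g"
  shows "computable_in C (\<lambda>x. f x div g x)"
proof -
  have div_eq: "(LEAST q. b = 0 \<or> a < Suc q * b) = a div b" for a b :: nat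
  proof (cases "b = 0")
    case False
    show ?thesis
    proof (rule Least_equality)
      show "b = 0 \<or> a < Suc (a div b) * b"
        using False by (metis div_less_iff_less_mult lessI mult.commute neq0_conv)
      show "a div b \<le> y" if "b = 0 \<or> a < Suc y * b" for y
        using that False by (metis less_Suc_eq_le less_mult_imp_div_less)
    qed
  qed simp
  have "\<exists>q. g x = 0 \<or> f x < Suc q * g x" for x
    by (rule exI[of _ "f x"]) (cases "g x", auto)
  moreover have "computable_in C (\<lambda>p. f (fst (prod_decode p)))"
    "computable_in C (\<lambda>p. g (fst (prod_decode p)))"
    by (intro computable_in_compose[OF assms(1)] computable_in_compose[OF assms(2)]
        computable_in_intros)+
  ultimately have "computable_in C (\<lambda>x. LEAST q. g x = 0 \<or> f x < Suc q * g x)"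
    by (intro computable_in_Least decidable_in_disj decidable_in_eq decidable_in_less
        computable_in_arith_intros) auto
  then show ?thesis by (simp only: div_eq)
qed

lemma computable_in_mod:
  assumes "computable_in C f" "computable_in C g"
  shows "computable_in C (\<lambda>x. f x mod g x)"
  using computable_in_diff[OF assms(1) computable_in_mult[OF assms(2) computable_in_div[OF assms]]]
  by (rule computable_in_cong) (simp add: minus_mult_div_eq_mod)

lemma decidable_in_set_decode:
  assumes "computable_in C f" "computable_in C g"
  shows "decidable_in C (\<lambda>x. f x \<in> set_decode (g x))"
proof -
  have "decidable_in C (\<lambda>x. g x div 2 ^ f x mod 2 = 1)"
    by (intro decidable_in_eq computable_in_mod computable_in_div computable_in_arith_intros assms)
  then show ?thesis by (rule decidable_in_cong) (simp add: set_decode_def odd_iff_mod_2_eq_one)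
qed

lemma decidable_in_finite: "finite F \<Longrightarrow> decidable_in C (\<lambda>x. x \<in> F)"
  using decidable_in_set_decode[OF computable_in_id computable_in_const, of C "set_encode F"]
  by simp

lemma decidable_in_compose:
  "decidable_in C R \<Longrightarrow> computable_in C f \<Longrightarrow> decidable_in C (\<lambda>x. R (f x))"
  unfolding decidable_in_def by (rule computable_in_compose[of C "\<lambda>x. if R x then 1 else 0"])

lemma decidable_in_le:
  "computable_in C f \<Longrightarrow> computable_in C g \<Longrightarrow> decidable_in C (\<lambda>x. f x \<le> g x)"
  using decidable_in_not[OF decidable_in_less[of C g f]] by (rule decidable_in_cong) auto

lemmas decidable_in_intros = decidable_in_const decidable_in_less decidable_in_le decidable_in_eq
  decidable_in_not decidable_in_conj decidable_in_disj decidable_in_iff decidable_in_ball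
  decidable_in_bex decidable_in_set_decode

section \<open>Strings, their codes, and K\<ouml>nig's lemma\<close>

definition paths :: "nat set \<Rightarrow> nat set set" where
  "paths T = {X. \<forall>l. strcode (init_seg X l) \<in> T}"

definition cylinder :: "bool list \<Rightarrow> nat set set" where
  "cylinder \<sigma> = {X. init_seg X (length \<sigma>) = \<sigma>}"

lemma pi01_class_iff: "pi01_class C P \<longleftrightarrow> (\<exists>T. decidable_in C (\<lambda>x. x \<in> T) \<and> P = paths T)"
  by (simp add: pi01_class_def paths_def computable_in_chi_iff)

lemma length_init_seg [simp]: "length (init_seg X l) = l"
  by (simp add: init_seg_def)

lemma nth_init_seg [simp]: "p < l \<Longrightarrow> init_seg X l ! p \<longleftrightarrow> p \<in> X"
  by (simp add: init_seg_def)

lemma take_init_seg [simp]: "j \<le> l \<Longrightarrow> take j (init_seg X l) = init_seg X j"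
  by (simp add: init_seg_def take_map)

lemma init_seg_Suc: "init_seg X (Suc n) = init_seg X n @ [n \<in> X]"
  by (simp add: init_seg_def)

lemma init_seg_eq_iff: "init_seg X l = init_seg Y l \<longleftrightarrow> (\<forall>p<l. p \<in> X \<longleftrightarrow> p \<in> Y)"
  by (simp add: list_eq_iff_nth_eq)

lemma finite_str_set [simp]: "finite (str_set w)"
  by (simp add: str_set_def)

lemma init_seg_str_set: "init_seg (str_set w) (length w) = w"
  by (simp add: list_eq_iff_nth_eq str_set_def)

lemma strcode_snoc: "strcode (w @ [b]) = strcode w + (if b then 2 else 1) * 2 ^ length w"
  by (induction w) auto

lemma strcode_init_seg: "strcode (init_seg X j) = (\<Sum>p<j. (if p \<in> X then 2 else 1) * 2 ^ p)"
  by (induction j) (simp_all add: init_seg_Suc strcode_snoc, simp add: init_seg_def)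

lemma inj_strcode: "inj strcode"
proof (rule injI)
  fix v w :: "bool list"
  show "strcode v = strcode w \<Longrightarrow> v = w"
  proof (induction v arbitrary: w)
    case Nil
    then show ?case by (cases w) auto
  next
    case (Cons a v)
    then obtain b u where w: "w = b # u" by (cases w) auto
    with Cons.prems
    have "2 * strcode v + (if a then 1 else 0) = 2 * strcode u + (if b then 1 else 0)"
      by simp
    then have "a = b" and "strcode v = strcode u" by (cases a; cases b; presburger)+
    with Cons.IH w show ?case by simp
  qed
qed

lemma set_encode_less_power2:
  assumes "F \<subseteq> {..<L}"
  shows "set_encode F < 2 ^ L"
proof -
  from assms have "set_encode F \<le> set_encode {..<L}"
    by (intro subset_decode_imp_le) (simp add: finite_subset)
  also have "set_encode {..<L} = 2 ^ L - 1"
    by (induction L) (simp_all add: lessThan_Suc set_encode_def)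
  finally have "set_encode F \<le> 2 ^ L - 1" .
  moreover have "(0::nat) < 2 ^ L" by simp
  ultimately show ?thesis by linarith
qed

lemma ex_string_iff_ex_code:
  "(\<exists>w. length w = L \<and> \<Phi> w) \<longleftrightarrow> (\<exists>s<2 ^ L. \<Phi> (init_seg (set_decode s) L))"
proof
  assume "\<exists>w. length w = L \<and> \<Phi> w"
  then obtain w where w: "length w = L" "\<Phi> w" by blast
  have "str_set w \<subseteq> {..<L}" using w(1) by (auto simp: str_set_def)
  then have "set_encode (str_set w) < 2 ^ L" "set_decode (set_encode (str_set w)) = str_set w"
    by (simp_all add: set_encode_less_power2 finite_subset)
  with w show "\<exists>s<2 ^ L. \<Phi> (init_seg (set_decode s) L)"
    using init_seg_str_set[of w] by metis
qed (metis length_init_seg)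

lemma computable_in_strcode_init_seg:
  assumes "computable_in C f" "computable_in C g"
  shows "computable_in C (\<lambda>x. strcode (init_seg (set_decode (f x)) (g x)))"
proof -
  have "computable_in C (\<lambda>p. f (fst (prod_decode p)))"
    by (rule computable_in_compose[OF assms(1) computable_in_fst[OF computable_in_id]])
  then have "computable_in C (\<lambda>x. \<Sum>p<g x. (if p \<in> set_decode (f x) then 2 else 1) * 2 ^ p)"
    by (intro computable_in_arith_intros computable_in_if decidable_in_set_decode assms)
  then show ?thesis by (simp add: strcode_init_seg)
qed

lemma infinitely_extendible_snoc:
  fixes w :: "bool list"
  assumes prefix_closed: "\<And>w j. P w \<Longrightarrow> P (take j w)"
    and extendible: "\<forall>l. \<exists>v. length v = l + length w \<and> P v \<and> prefix w v"
  shows "\<exists>b. \<forall>l. \<exists>v. length v = l + length (w @ [b]) \<and> P v \<and> prefix (w @ [b]) v"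
proof (rule ccontr)
  assume "\<nexists>b. \<forall>l. \<exists>v. length v = l + length (w @ [b]) \<and> P v \<and> prefix (w @ [b]) v"
  then have "\<forall>b. \<exists>l. \<forall>v. length v = l + Suc (length w) \<longrightarrow> P v \<longrightarrow> \<not> prefix (w @ [b]) v"
    by (metis add_Suc_right length_append_singleton)
  then obtain l :: "bool \<Rightarrow> nat" where
    bad: "\<And>b v. length v = l b + Suc (length w) \<Longrightarrow> P v \<Longrightarrow> \<not> prefix (w @ [b]) v"
    by metis
  obtain v where v: "length v = Suc (l True + l False) + length w" "P v" "prefix w v"
    using extendible by blast
  obtain zs where "v = w @ zs" "zs \<noteq> []"
    using v(1,3) unfolding prefix_def by force
  then obtain b zs' where vb: "v = w @ b # zs'"
    by (cases zs) auto
  then have "prefix (w @ [b]) (take (l b + Suc (length w)) v)"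
    by simp
  moreover have "length (take (l b + Suc (length w)) v) = l b + Suc (length w)"
    using v(1) by (cases b) auto
  ultimately show False
    using bad prefix_closed[OF v(2)] by blast
qed

lemma koenig:
  assumes prefix_closed: "\<And>w j. P w \<Longrightarrow> P (take j w)"
    and unbounded: "\<And>l. \<exists>w. length w = l \<and> P w"
  shows "\<exists>X. \<forall>l. P (init_seg X l)"
proof -
  define ext where "ext w \<longleftrightarrow> (\<forall>l. \<exists>v. length v = l + length w \<and> P v \<and> prefix w v)" for w
  define W where "W = rec_nat [] (\<lambda>_ w. w @ [SOME b. ext (w @ [b])])"
  have W_Suc: "W (Suc n) = W n @ [SOME b. ext (W n @ [b])]" for n
    by (simp add: W_def)
  have W: "ext (W n) \<and> length (W n) = n" for n
  proof (induction n)
    case 0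
    show ?case using unbounded by (simp add: W_def ext_def)
  next
    case (Suc n)
    then have "\<exists>b. ext (W n @ [b])"
      using infinitely_extendible_snoc[of P, OF prefix_closed] unfolding ext_def by blast
    then have "ext (W (Suc n))"
      unfolding W_Suc by (rule someI_ex)
    with Suc show ?case by (simp add: W_Suc)
  qed
  define X where "X = {n. W (Suc n) ! n}"
  have "init_seg X n = W n" for n
  proof (induction n)
    case 0
    show ?case by (simp add: init_seg_def W_def)
  next
    case (Suc n)
    then show ?case by (simp add: init_seg_Suc W_Suc X_def nth_append W)
  qed
  moreover have "P (W n)" for n
    using W[of n] unfolding ext_def prefix_def by fastforce
  ultimately show ?thesis by metis
qed

section \<open>A class that never refutes a guess computes A\<close>

text \<open>The finite set I guesses which parts of Y = Y_0 \<oplus> ... \<oplus> Y_{k-1} lie almost entirely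
  inside A; Y refutes the guess at n if n lies in a part that was guessed wrongly.\<close>

definition refutes :: "nat \<Rightarrow> nat set \<Rightarrow> nat set \<Rightarrow> nat set \<Rightarrow> nat \<Rightarrow> bool" where
  "refutes k A I Y n \<longleftrightarrow> (\<exists>i<k. k * n + i \<in> Y \<and> (i \<in> I \<longleftrightarrow> n \<notin> A))"

text \<open>The strings w that are, as far as they go, consistent with a path of paths T \<inter> cylinder \<sigma>
  putting n into some part i with (i \<in> I) = b.\<close>

definition allows :: "nat set \<Rightarrow> bool list \<Rightarrow> nat \<Rightarrow> nat set \<Rightarrow> bool \<Rightarrow> nat \<Rightarrow> bool list \<Rightarrow> bool" where
  "allows T \<sigma> k I b n w \<longleftrightarrow> (\<forall>j\<le>length w. strcode (take j w) \<in> T) \<and>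
     (length \<sigma> \<le> length w \<longrightarrow> take (length \<sigma>) w = \<sigma>) \<and>
     (k * n + k \<le> length w \<longrightarrow> (\<exists>i<k. (i \<in> I \<longleftrightarrow> b) \<and> w ! (k * n + i)))"

lemma allows_take: "allows T \<sigma> k I b n w \<Longrightarrow> allows T \<sigma> k I b n (take j w)"
  unfolding allows_def by (auto simp: min_def)

lemma allows_init_seg_all:
  "(\<forall>l. allows T \<sigma> k I b n (init_seg X l)) \<longleftrightarrow>
     X \<in> paths T \<inter> cylinder \<sigma> \<and> (\<exists>i<k. (i \<in> I \<longleftrightarrow> b) \<and> k * n + i \<in> X)"
proof
  assume all: "\<forall>l. allows T \<sigma> k I b n (init_seg X l)"
  have "strcode (init_seg X l) \<in> T" for l
    using all unfolding allows_def by (metis order.refl length_init_seg take_init_seg)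
  moreover have "init_seg X (length \<sigma>) = \<sigma>"
    using all[rule_format, of "length \<sigma>"] unfolding allows_def by simp
  moreover obtain i where "i < k" "i \<in> I \<longleftrightarrow> b" "init_seg X (k * n + k) ! (k * n + i)"
    using all[rule_format, of "k * n + k"] unfolding allows_def by auto
  ultimately show "X \<in> paths T \<inter> cylinder \<sigma> \<and> (\<exists>i<k. (i \<in> I \<longleftrightarrow> b) \<and> k * n + i \<in> X)"
    unfolding paths_def cylinder_def by auto
next
  assume "X \<in> paths T \<inter> cylinder \<sigma> \<and> (\<exists>i<k. (i \<in> I \<longleftrightarrow> b) \<and> k * n + i \<in> X)"
  then show "\<forall>l. allows T \<sigma> k I b n (init_seg X l)"
    unfolding allows_def paths_def cylinder_def by auto
qed

lemma allows_init_seg: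
  assumes L: "length \<sigma> + k * n + k \<le> L"
  shows "allows T \<sigma> k I b n (init_seg X L) \<longleftrightarrow>
    (\<forall>j<Suc L. strcode (init_seg X j) \<in> T) \<and> (\<forall>p<length \<sigma>. p \<in> X \<longleftrightarrow> p \<in> str_set \<sigma>) \<and>
    (\<exists>i<k. (i \<in> I \<longleftrightarrow> b) \<and> k * n + i \<in> X)"
proof -
  have "(\<forall>j\<le>L. strcode (take j (init_seg X L)) \<in> T) \<longleftrightarrow> (\<forall>j<Suc L. strcode (init_seg X j) \<in> T)"
    by (simp add: less_Suc_eq_le)
  moreover have "take (length \<sigma>) (init_seg X L) = \<sigma> \<longleftrightarrow> (\<forall>p<length \<sigma>. p \<in> X \<longleftrightarrow> p \<in> str_set \<sigma>)"
    using L init_seg_eq_iff[of X "length \<sigma>" "str_set \<sigma>"] by (simp add: init_seg_str_set)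
  moreover have "(\<exists>i<k. (i \<in> I \<longleftrightarrow> b) \<and> init_seg X L ! (k * n + i)) \<longleftrightarrow>
      (\<exists>i<k. (i \<in> I \<longleftrightarrow> b) \<and> k * n + i \<in> X)"
    using L by auto
  ultimately show ?thesis
    using L unfolding allows_def length_init_seg by simp
qed

context
  fixes C A T I :: "nat set" and \<sigma> :: "bool list" and k N :: nat
  assumes tree: "decidable_in C (\<lambda>x. x \<in> T)"
    and finite_guess: "finite I"
    and covers: "\<And>Y n. Y \<in> paths T \<Longrightarrow> \<exists>i<k. k * n + i \<in> Y"
    and nonempty: "paths T \<inter> cylinder \<sigma> \<noteq> {}"
    and never_refutes: "\<And>Y n. Y \<in> paths T \<inter> cylinder \<sigma> \<Longrightarrow> N < n \<Longrightarrow> \<not> refutes k A I Y n"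
begin

text \<open>Levels are offset by length \<sigma> + k * n + k, so that both guarded clauses of allows apply.\<close>

definition allowed_level :: "bool \<Rightarrow> nat \<Rightarrow> nat \<Rightarrow> bool" where
  "allowed_level b n l \<longleftrightarrow> (\<exists>w. length w = l + (length \<sigma> + k * n + k) \<and> allows T \<sigma> k I b n w)"

lemma allowed_level_correct_guess:
  assumes "N < n"
  shows "allowed_level (n \<in> A) n l"
proof -
  obtain Y where Y: "Y \<in> paths T \<inter> cylinder \<sigma>" using nonempty by blast
  then obtain i where i: "i < k" "k * n + i \<in> Y" using covers by blast
  with never_refutes[OF Y assms] have "i \<in> I \<longleftrightarrow> n \<in> A"
    unfolding refutes_def by blast
  with Y i have "allows T \<sigma> k I (n \<in> A) n (init_seg Y (l + (length \<sigma> + k * n + k)))"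
    using allows_init_seg_all by blast
  then show ?thesis
    unfolding allowed_level_def using length_init_seg by blast
qed

lemma allowed_level_wrong_guess_dies:
  assumes "N < n"
  shows "\<exists>l. \<not> allowed_level (n \<notin> A) n l"
proof (rule ccontr)
  assume "\<nexists>l. \<not> allowed_level (n \<notin> A) n l"
  then have "\<exists>w. length w = l \<and> allows T \<sigma> k I (n \<notin> A) n w" for l
    unfolding allowed_level_def using allows_take length_take
    by (metis le_add1 min_absorb2)
  then obtain Y where "\<forall>l. allows T \<sigma> k I (n \<notin> A) n (init_seg Y l)"
    using koenig[of "allows T \<sigma> k I (n \<notin> A) n"] allows_take by blast
  then have "Y \<in> paths T \<inter> cylinder \<sigma>" "refutes k A I Y n"
    unfolding allows_init_seg_all refutes_def by blast+
  with never_refutes assms show False by blast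
qed

lemma decidable_allowed_level:
  "decidable_in C (\<lambda>x. allowed_level b (fst (prod_decode x)) (snd (prod_decode x)))"
proof -
  have "decidable_in C (\<lambda>x. \<exists>s<2 ^ (snd (prod_decode x) + (length \<sigma> + k * fst (prod_decode x) + k)).
      (\<forall>j<Suc (snd (prod_decode x) + (length \<sigma> + k * fst (prod_decode x) + k)).
          strcode (init_seg (set_decode s) j) \<in> T) \<and>
      (\<forall>p<length \<sigma>. p \<in> set_decode s \<longleftrightarrow> p \<in> str_set \<sigma>) \<and>
      (\<exists>i<k. (i \<in> I \<longleftrightarrow> b) \<and> k * fst (prod_decode x) + i \<in> set_decode s))"
    by (intro decidable_in_intros computable_in_arith_intros computable_in_strcode_init_seg
        decidable_in_compose[OF tree] decidable_in_compose[OF decidable_in_finite]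
        finite_guess finite_str_set)
  then show ?thesis
    unfolding allowed_level_def ex_string_iff_ex_code
    by (rule decidable_in_cong) (simp add: allows_init_seg)
qed

text \<open>For n > N only the wrong guess about n can die, so the first level at which one of the two
  guesses dies decides n; the finitely many n \<le> N are read off the finite set A \<inter> {..N}.\<close>

definition stage :: "nat \<Rightarrow> nat" where
  "stage n = (LEAST l. n \<le> N \<or> \<not> allowed_level True n l \<or> \<not> allowed_level False n l)"

lemma stage_exists: "\<exists>l. n \<le> N \<or> \<not> allowed_level True n l \<or> \<not> allowed_level False n l"
proof (cases "N < n")
  case True
  then obtain l where "\<not> allowed_level (n \<notin> A) n l"
    using allowed_level_wrong_guess_dies by blast
  then show ?thesis by (cases "n \<in> A") auto
qed (simp add: not_less)

lemma mem_iff_stage: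
  "n \<in> A \<longleftrightarrow> n \<le> N \<and> n \<in> A \<inter> {..N} \<or> \<not> n \<le> N \<and> \<not> allowed_level False n (stage n)"
proof (cases "n \<le> N")
  case False
  then have "\<not> allowed_level True n (stage n) \<or> \<not> allowed_level False n (stage n)"
    unfolding stage_def using LeastI_ex[OF stage_exists] by blast
  with False show ?thesis
    using allowed_level_correct_guess[of n "stage n"] by (cases "n \<in> A") auto
qed auto

theorem turing_le_if_never_refutes: "turing_le A C"
proof -
  have "computable_in C stage"
    unfolding stage_def using stage_exists
    by (intro computable_in_Least decidable_in_intros computable_in_arith_intros
        decidable_allowed_level) auto
  then have "decidable_in C (\<lambda>n. allowed_level False n (stage n))"
    using decidable_in_compose[OF decidable_allowed_level
        computable_in_prod_encode[OF computable_in_id]]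
    by simp
  then have "decidable_in C (\<lambda>n.
      n \<le> N \<and> n \<in> A \<inter> {..N} \<or> \<not> n \<le> N \<and> \<not> allowed_level False n (stage n))"
    by (intro decidable_in_disj decidable_in_conj decidable_in_not decidable_in_le
        decidable_in_finite computable_in_id computable_in_const) simp_all
  then show ?thesis
    unfolding turing_le_iff_decidable_in by (rule decidable_in_cong) (rule mem_iff_stage[symmetric])
qed

end

section \<open>Every condition has an acceptable part\<close>

lemma cylinder_nth:
  assumes "Z \<in> cylinder \<tau>" "p < length \<tau>"
  shows "\<tau> ! p \<longleftrightarrow> p \<in> Z"
proof -
  have "init_seg Z (length \<tau>) ! p \<longleftrightarrow> p \<in> Z" using assms(2) by simp
  with assms(1) show ?thesis unfolding cylinder_def by simp
qed

lemma cylinder_init_seg_subset: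
  assumes "Y \<in> cylinder \<tau>" "length \<tau> \<le> L"
  shows "cylinder (init_seg Y L) \<subseteq> cylinder \<tau>"
proof
  fix Z assume "Z \<in> cylinder (init_seg Y L)"
  then have "take (length \<tau>) (init_seg Z L) = take (length \<tau>) (init_seg Y L)"
    unfolding cylinder_def by simp
  then have "init_seg Z (length \<tau>) = take (length \<tau>) (init_seg Y L)"
    using assms(2) by simp
  with assms show "Z \<in> cylinder \<tau>" unfolding cylinder_def by simp
qed

lemma cylinder_subset_cylinder_init_seg:
  assumes "Y \<in> cylinder \<tau>" "l \<le> length \<tau>"
  shows "cylinder \<tau> \<subseteq> cylinder (init_seg Y l)"
proof
  fix Z assume "Z \<in> cylinder \<tau>"
  with assms have "init_seg Z (length \<tau>) = init_seg Y (length \<tau>)" unfolding cylinder_def by simp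
  then have "take l (init_seg Z (length \<tau>)) = take l (init_seg Y (length \<tau>))" by simp
  with assms(2) show "Z \<in> cylinder (init_seg Y l)" unfolding cylinder_def by simp
qed

lemma init_seg_in_cylinder: "Y \<in> cylinder (init_seg Y L)"
  by (simp add: cylinder_def)

lemma mem_paths_if_extendible:
  assumes "\<And>l. paths T \<inter> cylinder (init_seg X l) \<noteq> {}"
  shows "X \<in> paths T"
proof -
  have "strcode (init_seg X l) \<in> T" for l
  proof -
    obtain Y where "Y \<in> paths T" "init_seg Y l = init_seg X l"
      using assms[of l] unfolding cylinder_def by auto
    then show ?thesis unfolding paths_def by (metis mem_Collect_eq)
  qed
  then show ?thesis unfolding paths_def by blast
qed

lemma nested_cylinders_intersect:
  assumes mono: "\<And>s t. s \<le> t \<Longrightarrow> cylinder (\<tau> t) \<subseteq> cylinder (\<tau> s)"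
    and nonempty: "\<And>s. cylinder (\<tau> s) \<noteq> {}"
    and long: "\<And>s. s \<le> length (\<tau> s)"
  shows "\<exists>X. \<forall>s. X \<in> cylinder (\<tau> s)"
proof -
  define X where "X = {p. \<tau> (Suc p) ! p}"
  have "X \<in> cylinder (\<tau> s)" for s
  proof -
    have "\<tau> s ! p \<longleftrightarrow> p \<in> X" if p: "p < length (\<tau> s)" for p
    proof -
      obtain Z where Z: "Z \<in> cylinder (\<tau> (max s (Suc p)))" using nonempty by blast
      have "p < length (\<tau> (Suc p))" using long[of "Suc p"] by simp
      moreover have "Z \<in> cylinder (\<tau> s)" "Z \<in> cylinder (\<tau> (Suc p))"
        using Z mono[of s "max s (Suc p)"] mono[of "Suc p" "max s (Suc p)"] by auto
      ultimately show ?thesis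
        using p unfolding X_def by (simp add: cylinder_nth)
    qed
    then show ?thesis unfolding cylinder_def by (simp add: list_eq_iff_nth_eq)
  qed
  then show ?thesis by blast
qed

lemma generic_path:
  fixes D :: "nat \<Rightarrow> nat set set"
  assumes nonempty: "paths T \<noteq> {}"
    and dense: "\<And>s \<tau>. paths T \<inter> cylinder \<tau> \<noteq> {} \<Longrightarrow>
      \<exists>\<tau>'. paths T \<inter> cylinder \<tau>' \<noteq> {} \<and> cylinder \<tau>' \<subseteq> cylinder \<tau> \<inter> D s"
  shows "\<exists>X\<in>paths T. \<forall>s. X \<in> D s"
proof -
  define good where "good \<tau> s \<tau>' \<longleftrightarrow> paths T \<inter> cylinder \<tau>' \<noteq> {} \<and>
    cylinder \<tau>' \<subseteq> cylinder \<tau> \<inter> D s \<and> length \<tau> < length \<tau>'" for \<tau> s \<tau>'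
  have good_ex: "\<exists>\<tau>'. good \<tau> s \<tau>'" if ne: "paths T \<inter> cylinder \<tau> \<noteq> {}" for \<tau> s
  proof -
    obtain \<tau>1 Y where "Y \<in> paths T \<inter> cylinder \<tau>1" "cylinder \<tau>1 \<subseteq> cylinder \<tau> \<inter> D s"
      using dense[OF ne] by blast
    then show ?thesis
      unfolding good_def
      using init_seg_in_cylinder[of Y "Suc (length \<tau>1 + length \<tau>)"]
        cylinder_init_seg_subset[of Y \<tau>1 "Suc (length \<tau>1 + length \<tau>)"]
      by (intro exI[of _ "init_seg Y (Suc (length \<tau>1 + length \<tau>))"]) auto
  qed
  define sq where "sq = rec_nat [] (\<lambda>s \<tau>. SOME \<tau>'. good \<tau> s \<tau>')"
  have sq_Suc: "sq (Suc s) = (SOME \<tau>'. good (sq s) s \<tau>')" for s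
    by (simp add: sq_def)
  have sq: "paths T \<inter> cylinder (sq s) \<noteq> {} \<and> s \<le> length (sq s)" for s
  proof (induction s)
    case 0
    then show ?case using nonempty by (simp add: sq_def cylinder_def init_seg_def)
  next
    case (Suc s)
    then have "good (sq s) s (sq (Suc s))"
      unfolding sq_Suc using someI_ex[OF good_ex] by blast
    with Suc show ?case unfolding good_def by auto
  qed
  have sq_step: "good (sq s) s (sq (Suc s))" for s
    unfolding sq_Suc using someI_ex[OF good_ex] sq by blast
  have sq_mono: "s \<le> t \<Longrightarrow> cylinder (sq t) \<subseteq> cylinder (sq s)" for s t
    by (induction t rule: dec_induct) (use sq_step in \<open>auto simp: good_def\<close>)
  have "\<exists>X. \<forall>s. X \<in> cylinder (sq s)"
    by (rule nested_cylinders_intersect) (use sq_mono sq in blast)+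
  then obtain X where X_cylinder: "\<And>s. X \<in> cylinder (sq s)" by blast
  have "X \<in> paths T"
  proof (rule mem_paths_if_extendible)
    fix l
    have "cylinder (sq l) \<subseteq> cylinder (init_seg X l)"
      using cylinder_subset_cylinder_init_seg[OF X_cylinder] sq by blast
    then show "paths T \<inter> cylinder (init_seg X l) \<noteq> {}" using sq[of l] by blast
  qed
  moreover have "X \<in> D s" for s
    using sq_step[of s] X_cylinder[of "Suc s"] unfolding good_def by blast
  ultimately show ?thesis by blast
qed

lemma refutes_cylinder:
  assumes "Y \<in> cylinder \<tau>" "k * n + k \<le> length \<tau>" "Z \<in> cylinder \<tau>"
  shows "refutes k A I Z n \<longleftrightarrow> refutes k A I Y n"
proof -
  have "k * n + i \<in> Z \<longleftrightarrow> k * n + i \<in> Y" if "i < k" for i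
    using assms that cylinder_nth[of Y \<tau> "k * n + i"] cylinder_nth[of Z \<tau> "k * n + i"] by simp
  then show ?thesis unfolding refutes_def by blast
qed

lemma refutation_dense:
  assumes "\<not> turing_le A C" "decidable_in C (\<lambda>x. x \<in> T)" "finite I"
    and "\<And>Y n. Y \<in> paths T \<Longrightarrow> \<exists>i<k. k * n + i \<in> Y"
    and "paths T \<inter> cylinder \<tau> \<noteq> {}"
  shows "\<exists>\<tau>'. paths T \<inter> cylinder \<tau>' \<noteq> {} \<and> cylinder \<tau>' \<subseteq> cylinder \<tau> \<inter> {Z. \<exists>n>N. refutes k A I Z n}"
proof -
  obtain Y n where Y: "Y \<in> paths T \<inter> cylinder \<tau>" and n: "N < n" "refutes k A I Y n"
    using assms turing_le_if_never_refutes[of C T I k \<tau> N A] by blast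
  let ?\<tau>' = "init_seg Y (length \<tau> + k * n + k)"
  have "refutes k A I Z n" if "Z \<in> cylinder ?\<tau>'" for Z
    using refutes_cylinder[OF init_seg_in_cylinder _ that] n(2) by simp
  then have "cylinder ?\<tau>' \<subseteq> {Z. \<exists>n>N. refutes k A I Z n}"
    using n(1) by blast
  moreover have "cylinder ?\<tau>' \<subseteq> cylinder \<tau>"
    using Y by (intro cylinder_init_seg_subset) auto
  moreover have "Y \<in> paths T \<inter> cylinder ?\<tau>'"
    using Y init_seg_in_cylinder by blast
  ultimately show ?thesis by blast
qed

theorem some_part_acceptable:
  assumes "\<not> turing_le A C" "is_condition C c"
  shows "\<exists>i. acceptable_part A c i"
proof (rule ccontr)
  assume none: "\<nexists>i. acceptable_part A c i"
  obtain k \<sigma>s P where c: "c = (k, \<sigma>s, P)" by (cases c)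
  obtain T where T: "decidable_in C (\<lambda>x. x \<in> T)" and P: "P = paths T"
    using assms(2) unfolding c is_condition_def pi01_class_iff by blast
  have nonempty: "paths T \<noteq> {}"
    using assms(2) P unfolding c is_condition_def by simp
  have covers: "\<exists>i<k. k * n + i \<in> Y" if "Y \<in> paths T" for Y n
    using assms(2) that P unfolding c is_condition_def codes_partition_def part_def by blast
  have thin: "finite (part k Y i \<inter> A) \<or> finite (part k Y i - A)" if "Y \<in> paths T" "i < k" for Y i
    using none that P unfolding c acceptable_part_def by blast
  \<comment> \<open>s runs through the codes of all pairs of a finite guess and a bound\<close>
  define D where
    "D s = {Z. \<exists>n>snd (prod_decode s). refutes k A (set_decode (fst (prod_decode s))) Z n}" for s
  obtain Y where Y: "Y \<in> paths T" and refuted: "\<And>s. Y \<in> D s"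
    using generic_path[OF nonempty refutation_dense[OF assms(1) T finite_set_decode covers]]
    unfolding D_def by blast
  define I where "I = {i. i < k \<and> finite (part k Y i - A)}"
  define F where "F = (\<Union>i<k. if i \<in> I then part k Y i - A else part k Y i \<inter> A)"
  have "finite (if i \<in> I then part k Y i - A else part k Y i \<inter> A)" if "i < k" for i
    using thin[OF Y that] that unfolding I_def by auto
  then have "finite F"
    unfolding F_def by (intro finite_UN_I) auto
  then obtain N where N: "\<forall>n\<in>F. n \<le> N"
    using finite_nat_set_iff_bounded_le by blast
  obtain n where "N < n" "refutes k A I Y n"
    using refuted[of "prod_encode (set_encode I, N)"] unfolding D_def I_def by auto
  then have "n \<in> F"
    unfolding refutes_def F_def part_def by auto
  with N \<open>N < n\<close> show False by auto
qed

section \<open>Forcing Q_m on every acceptable part\<close>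

lemma pi01_class_restrict:
  assumes "pi01_class C Q"
  shows "pi01_class C (Q \<inter> {X. \<Phi> (init_seg X M)})"
proof -
  obtain T where T: "decidable_in C (\<lambda>x. x \<in> T)" and Q: "Q = paths T"
    using assms unfolding pi01_class_iff by blast
  define Bad where "Bad = strcode ` {w. length w = M \<and> \<not> \<Phi> w}"
  have "finite Bad"
    unfolding Bad_def using finite_lists_length_eq[of "UNIV :: bool set" M] by simp
  then have "decidable_in C (\<lambda>x. x \<in> T - Bad)"
    using decidable_in_conj[OF T decidable_in_not[OF decidable_in_finite]] by simp
  moreover have "strcode (init_seg X l) \<in> Bad \<longleftrightarrow> l = M \<and> \<not> \<Phi> (init_seg X M)" for X l
    unfolding Bad_def by (auto simp: inj_image_mem_iff[OF inj_strcode])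
  then have "paths (T - Bad) = Q \<inter> {X. \<Phi> (init_seg X M)}"
    unfolding Q paths_def by auto
  ultimately show ?thesis
    unfolding pi01_class_iff by blast
qed

lemma mathias_ext_refl: "mathias_ext \<sigma> X \<sigma> X"
  by (simp add: mathias_ext_def)

lemma mathias_ext_trans:
  "mathias_ext \<rho> Z \<tau> Y \<Longrightarrow> mathias_ext \<tau> Y \<sigma> X \<Longrightarrow> mathias_ext \<rho> Z \<sigma> X"
  unfolding mathias_ext_def by (auto intro: prefix_order.trans)

lemma cond_extends_refl: "cond_extends c c"
  unfolding cond_extends_def by (cases c) (force simp: mathias_ext_refl)

lemma cond_extends_trans:
  assumes "cond_extends e d" "cond_extends d c"
  shows "cond_extends e c"
proof -
  obtain l \<rho>s R m \<tau>s Q k \<sigma>s P where cs: "e = (l, \<rho>s, R)" "d = (m, \<tau>s, Q)" "c = (k, \<sigma>s, P)"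
    by (cases e, cases d, cases c) auto
  obtain g where g: "\<forall>i<l. g i < m"
    "\<forall>Z\<in>R. \<exists>Y\<in>Q. \<forall>i<l. mathias_ext (\<rho>s ! i) (part l Z i) (\<tau>s ! g i) (part m Y (g i))"
    using assms(1) unfolding cs cond_extends_def by auto
  obtain f where f: "\<forall>i<m. f i < k"
    "\<forall>Y\<in>Q. \<exists>X\<in>P. \<forall>i<m. mathias_ext (\<tau>s ! i) (part m Y i) (\<sigma>s ! f i) (part k X (f i))"
    using assms(2) unfolding cs cond_extends_def by auto
  have "\<forall>Z\<in>R. \<exists>X\<in>P. \<forall>i<l. mathias_ext (\<rho>s ! i) (part l Z i) (\<sigma>s ! f (g i)) (part k X (f (g i)))"
    using g f by (meson mathias_ext_trans)
  then show ?thesis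
    unfolding cs cond_extends_def prod.case using f g by (intro exI[of _ "\<lambda>i. f (g i)"]) auto
qed

lemma repl_append_subset:
  assumes "\<forall>p\<in>S. p \<in> Y \<and> length \<tau> \<le> p"
  shows "repl Y (\<tau> @ map (\<lambda>p. p \<in> S) [length \<tau>..<M]) \<subseteq> repl Y \<tau>"
  using assms by (auto simp: repl_def nth_append)

lemma str_set_append_superset:
  assumes "\<forall>p\<in>S. length \<tau> \<le> p \<and> p < M"
  shows "S \<subseteq> str_set (\<tau> @ map (\<lambda>p. p \<in> S) [length \<tau>..<M])"
  using assms by (auto simp: str_set_def nth_append)

lemma pi01_class_part_superset:
  assumes "pi01_class C Q" "finite S" "j < k"
  shows "pi01_class C {Y \<in> Q. S \<subseteq> part k Y j}"
proof -
  define M where "M = Suc (Max (insert 0 S))"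
  have "k * p + j < k * M" if "p \<in> S" for p
  proof -
    have "Suc p \<le> M" using assms(2) that unfolding M_def by simp
    then have "k * p + k \<le> k * M" by (metis mult_Suc_right mult_le_mono2 add.commute)
    with assms(3) show ?thesis by linarith
  qed
  then have "{Y \<in> Q. S \<subseteq> part k Y j} =
      Q \<inter> {Y. (\<lambda>w. \<forall>p\<in>S. w ! (k * p + j)) (init_seg Y (k * M))}"
    unfolding part_def by auto
  then show ?thesis
    using pi01_class_restrict[OF assms(1)] by simp
qed

lemma finite_subset_meeting_both:
  fixes X A :: "nat set"
  assumes "infinite (X \<inter> A)" "infinite (X - A)"
  shows "\<exists>S. finite S \<and> S \<subseteq> X \<and> (\<forall>p\<in>S. L \<le> p) \<and> m \<le> card (S \<inter> A) \<and> m \<le> card (S - A)"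
proof -
  obtain S1 where S1: "finite S1" "card S1 = m" "S1 \<subseteq> X \<inter> A - {..<L}"
    using infinite_arbitrarily_large[OF Diff_infinite_finite[OF finite_lessThan assms(1)]] by blast
  obtain S2 where S2: "finite S2" "card S2 = m" "S2 \<subseteq> X - A - {..<L}"
    using infinite_arbitrarily_large[OF Diff_infinite_finite[OF finite_lessThan assms(2)]] by blast
  have "card S1 \<le> card ((S1 \<union> S2) \<inter> A)"
    using S1 S2 by (intro card_mono) auto
  moreover have "card S2 \<le> card ((S1 \<union> S2) - A)"
    using S1 S2 by (intro card_mono) auto
  ultimately show ?thesis
    using S1 S2 by (intro exI[of _ "S1 \<union> S2"]) auto
qed

lemma extend_part_by_finite_set:
  assumes c: "is_condition C (k, \<tau>s, Q)" and j: "j < k"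
    and S: "X \<in> Q" "finite S" "S \<subseteq> part k X j" "\<forall>p\<in>S. length (\<tau>s ! j) \<le> p"
  defines "\<tau> \<equiv> \<tau>s ! j @ map (\<lambda>p. p \<in> S) [length (\<tau>s ! j)..<Suc (Max (insert 0 S))]"
    and "Q' \<equiv> {Y \<in> Q. S \<subseteq> part k Y j}"
  shows "is_condition C (k, \<tau>s[j := \<tau>], Q')" "cond_extends (k, \<tau>s[j := \<tau>], Q') (k, \<tau>s, Q)"
    "S \<subseteq> str_set (\<tau>s[j := \<tau>] ! j)"
proof -
  show "is_condition C (k, \<tau>s[j := \<tau>], Q')"
    using c S(1,3) pi01_class_part_superset[OF _ S(2) j, of C Q]
    unfolding is_condition_def Q'_def by auto
  have "mathias_ext (\<tau>s[j := \<tau>] ! i) (part k Y i) (\<tau>s ! i) (part k Y i)"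
    if "Y \<in> Q'" "i < k" for Y i
  proof (cases "i = j")
    case True
    have "repl (part k Y j) \<tau> \<subseteq> repl (part k Y j) (\<tau>s ! j)"
      unfolding \<tau>_def using that(1) S(4) by (intro repl_append_subset) (auto simp: Q'_def)
    with True c j show ?thesis
      unfolding mathias_ext_def is_condition_def \<tau>_def by auto
  qed (simp add: mathias_ext_refl)
  then have "\<forall>Y\<in>Q'. \<exists>X\<in>Q. \<forall>i<k. mathias_ext (\<tau>s[j := \<tau>] ! i) (part k Y i) (\<tau>s ! i) (part k X i)"
    unfolding Q'_def by fastforce
  then show "cond_extends (k, \<tau>s[j := \<tau>], Q') (k, \<tau>s, Q)"
    unfolding cond_extends_def prod.case by (intro exI[of _ "\<lambda>i. i"]) simp
  have "S \<subseteq> str_set \<tau>"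
    unfolding \<tau>_def using S(2,4) by (intro str_set_append_superset) (simp add: le_imp_less_Suc)
  moreover have "\<tau>s[j := \<tau>] ! j = \<tau>"
    using c j by (simp add: is_condition_def)
  ultimately show "S \<subseteq> str_set (\<tau>s[j := \<tau>] ! j)" by simp
qed

lemma refine_part:
  assumes c: "is_condition C (k, \<tau>s, Q)" and j: "j < k"
  shows "\<exists>\<tau> Q'. Q' \<subseteq> Q \<and> is_condition C (k, \<tau>s[j := \<tau>], Q') \<and>
    cond_extends (k, \<tau>s[j := \<tau>], Q') (k, \<tau>s, Q) \<and>
    (acceptable_part A (k, \<tau>s[j := \<tau>], Q') j \<longrightarrow> forces_Q A (k, \<tau>s[j := \<tau>], Q') j m)"
proof (cases "\<exists>X\<in>Q. \<exists>S. finite S \<and> S \<subseteq> part k X j \<and> (\<forall>p\<in>S. length (\<tau>s ! j) \<le> p) \<and>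
    m \<le> card (S \<inter> A) \<and> m \<le> card (S - A)")
  case True
  then obtain X S where S: "X \<in> Q" "finite S" "S \<subseteq> part k X j"
    "\<forall>p\<in>S. length (\<tau>s ! j) \<le> p" and large: "m \<le> card (S \<inter> A)" "m \<le> card (S - A)"
    by blast
  obtain \<tau> where \<tau>: "is_condition C (k, \<tau>s[j := \<tau>], {Y \<in> Q. S \<subseteq> part k Y j})"
    "cond_extends (k, \<tau>s[j := \<tau>], {Y \<in> Q. S \<subseteq> part k Y j}) (k, \<tau>s, Q)"
    "S \<subseteq> str_set (\<tau>s[j := \<tau>] ! j)"
    using extend_part_by_finite_set[OF c j S] by blast
  then have "card (S \<inter> A) \<le> card (str_set (\<tau>s[j := \<tau>] ! j) \<inter> A)"
    "card (S - A) \<le> card (str_set (\<tau>s[j := \<tau>] ! j) - A)"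
    by (intro card_mono, simp, blast)+
  with large have "forces_Q A (k, \<tau>s[j := \<tau>], {Y \<in> Q. S \<subseteq> part k Y j}) j m"
    unfolding forces_Q_def prod.case by (intro conjI; linarith)
  with \<tau> show ?thesis
    by (intro exI[of _ \<tau>] exI[of _ "{Y \<in> Q. S \<subseteq> part k Y j}"]) auto
next
  case False
  have "\<not> acceptable_part A (k, \<tau>s, Q) j"
  proof
    assume "acceptable_part A (k, \<tau>s, Q) j"
    then obtain X where "X \<in> Q" "infinite (part k X j \<inter> A)" "infinite (part k X j - A)"
      unfolding acceptable_part_def by auto
    with False finite_subset_meeting_both[of "part k X j" A "length (\<tau>s ! j)" m] show False
      by blast
  qed
  then show ?thesis
    using c cond_extends_refl by (intro exI[of _ "\<tau>s ! j"] exI[of _ Q]) simp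
qed

lemma acceptable_part_subset:
  "Q' \<subseteq> Q \<Longrightarrow> acceptable_part A (k, \<tau>s', Q') i \<Longrightarrow> acceptable_part A (k, \<tau>s, Q) i"
  unfolding acceptable_part_def by auto

lemma forcing_first_parts:
  assumes c: "is_condition C (k, \<sigma>s, P)" and "j \<le> k"
  shows "\<exists>\<tau>s Q. is_condition C (k, \<tau>s, Q) \<and> cond_extends (k, \<tau>s, Q) (k, \<sigma>s, P) \<and>
    (\<forall>i<j. acceptable_part A (k, \<tau>s, Q) i \<longrightarrow> forces_Q A (k, \<tau>s, Q) i m)"
  using \<open>j \<le> k\<close>
proof (induction j)
  case 0
  show ?case using c cond_extends_refl by blast
next
  case (Suc j)
  then obtain \<tau>s Q where d: "is_condition C (k, \<tau>s, Q)" "cond_extends (k, \<tau>s, Q) (k, \<sigma>s, P)"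
    and forced: "\<forall>i<j. acceptable_part A (k, \<tau>s, Q) i \<longrightarrow> forces_Q A (k, \<tau>s, Q) i m"
    by auto
  obtain \<tau> Q' where Q': "Q' \<subseteq> Q" and d': "is_condition C (k, \<tau>s[j := \<tau>], Q')"
    "cond_extends (k, \<tau>s[j := \<tau>], Q') (k, \<tau>s, Q)"
    and forced_j: "acceptable_part A (k, \<tau>s[j := \<tau>], Q') j \<longrightarrow> forces_Q A (k, \<tau>s[j := \<tau>], Q') j m"
    using refine_part[OF d(1), of j A m] Suc.prems by auto
  have "acceptable_part A (k, \<tau>s[j := \<tau>], Q') i \<longrightarrow> forces_Q A (k, \<tau>s[j := \<tau>], Q') i m"
    if "i < j" for i
    using forced that acceptable_part_subset[OF Q'] by (simp add: forces_Q_def)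
  with forced_j have "\<forall>i<Suc j. acceptable_part A (k, \<tau>s[j := \<tau>], Q') i \<longrightarrow>
      forces_Q A (k, \<tau>s[j := \<tau>], Q') i m"
    using less_Suc_eq by auto
  with d' cond_extends_trans[OF d'(2) d(2)] show ?case by blast
qed

theorem extension_forcing_Q:
  assumes "is_condition C c"
  shows "\<exists>d. is_condition C d \<and> cond_extends d c \<and> (\<forall>i. acceptable_part A d i \<longrightarrow> forces_Q A d i m)"
proof -
  obtain k \<sigma>s P where c: "c = (k, \<sigma>s, P)" by (cases c)
  obtain \<tau>s Q where "is_condition C (k, \<tau>s, Q)" "cond_extends (k, \<tau>s, Q) c"
    "\<forall>i<k. acceptable_part A (k, \<tau>s, Q) i \<longrightarrow> forces_Q A (k, \<tau>s, Q) i m"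
    using forcing_first_parts[OF assms[unfolded c] order.refl] c by blast
  moreover have "acceptable_part A (k, \<tau>s, Q) i \<Longrightarrow> i < k" for i
    by (simp add: acceptable_part_def)
  ultimately show ?thesis by blast
qed

theorem lemma4p1:
  fixes C A :: "nat set"
  assumes "\<not> turing_le A C"
  shows "(\<forall>c. is_condition C c \<longrightarrow> (\<exists>i. acceptable_part A c i)) \<and>
         (\<forall>c m. is_condition C c \<longrightarrow>
            (\<exists>d. is_condition C d \<and> cond_extends d c \<and>
                 (\<forall>i. acceptable_part A d i \<longrightarrow> forces_Q A d i m)))"
  using some_part_acceptable[OF assms] extension_forcing_Q by blast

end
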